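(* Let $m\in\mathbb N$, $M\in{\rm Mat}_m(\mathbb Z)$, and let $S\in{\rm Mat}_m(\mathbb Z)\cap GL_m(\mathbb Q)$ be such that $S^{-1}MS$ is the rational canonical form of $M$. Then for every prime $p$ with $\gcd(\det(S),p)=1$ and for which $M$ has finite $\mathbb Z_p$-order $k$, the move graph $\Gamma_{M,\,p}$ contains a directed $k$-cycle.
   Context: $\mathbb Z_n$ denotes the integers modulo $n$. For $M\in{\rm Mat}_m(\mathbb Z)$, the move graph $\Gamma_{M,\,n}$ is the directed graph with vertex set $\mathbb Z_n^m$ and arc set $\{({\bf x},{\bf y}) : {\bf y}^T=M{\bf x}^T \text{ in } \mathbb Z_n^m\}$ (loops allowed). The $\mathbb Z_n$-order of $M$ is the least positive integer $k$ (if it exists) such that $M^k$ acts as the identity on $\mathbb Z_n^m$. A directed $k$-cycle is a cycle of length $k$ in the underlying undirected graph such that in the induced directed subgraph on it every vertex has in-degree and out-degree $1$ (a loop counts as a directed $1$-cycle, a pair of opposite arcs as a directed $2$-cycle). *)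

theory Defs
  imports "Jordan_Normal_Form.Determinant" "HOL-Computational_Algebra.Polynomial"
begin

definition companion_mat :: "'a :: comm_ring_1 poly \<Rightarrow> 'a mat" where
  "companion_mat f = mat (degree f) (degree f)
     (\<lambda>(i, j). if j = degree f - 1 then - coeff f i
               else if i = j + 1 then 1 else 0)"

definition rational_canonical_form :: "rat mat \<Rightarrow> bool" where
  "rational_canonical_form R \<longleftrightarrow>
     (\<exists>fs :: rat poly list.
        (\<forall>f \<in> set fs. lead_coeff f = 1 \<and> degree f \<ge> 1) \<and>
        (\<forall>i. Suc i < length fs \<longrightarrow> fs ! i dvd fs ! Suc i) \<and>
        R = diag_block_mat (map companion_mat fs))"

definition is_rcf_of :: "rat mat \<Rightarrow> int mat \<Rightarrow> bool" where
  "is_rcf_of R M \<longleftrightarrow> rational_canonical_form R \<and> similar_mat (map_mat rat_of_int M) R"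

(* vertex set Z_n^m, elements represented by integer vectors with entries in {0..<n} *)
definition Zn_vecs :: "nat \<Rightarrow> int \<Rightarrow> int vec set" where
  "Zn_vecs m n = {x. dim_vec x = m \<and> (\<forall>i < m. 0 \<le> x $ i \<and> x $ i < n)}"

definition Zn_act :: "int mat \<Rightarrow> int \<Rightarrow> int vec \<Rightarrow> int vec" where
  "Zn_act M n x = map_vec (\<lambda>a. a mod n) (M *\<^sub>v x)"

definition move_arc :: "int mat \<Rightarrow> int \<Rightarrow> int vec \<Rightarrow> int vec \<Rightarrow> bool" where
  "move_arc M n x y \<longleftrightarrow> x \<in> Zn_vecs (dim_col M) n \<and> y \<in> Zn_vecs (dim_col M) n
      \<and> y = Zn_act M n x"

definition acts_as_id :: "int mat \<Rightarrow> int \<Rightarrow> bool" where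
  "acts_as_id A n \<longleftrightarrow> (\<forall>x \<in> Zn_vecs (dim_col A) n. Zn_act A n x = x)"

definition has_Zn_order :: "int mat \<Rightarrow> int \<Rightarrow> nat \<Rightarrow> bool" where
  "has_Zn_order M n k \<longleftrightarrow> 0 < k \<and> acts_as_id (M ^\<^sub>m k) n \<and>
     (\<forall>j. 0 < j \<and> j < k \<longrightarrow> \<not> acts_as_id (M ^\<^sub>m j) n)"

(* directed k-cycle in a digraph with vertex set V and arc relation A:
   k distinct vertices x_0,...,x_(k-1) forming a cycle of the underlying graph
   (x_i adjacent to x_(i+1 mod k)) such that in the induced subgraph every vertex
   has in-degree and out-degree 1 (loops counted). Stated with the cycle
   already consistently oriented, which is equivalent. *)
definition has_directed_cycle :: "'v set \<Rightarrow> ('v \<Rightarrow> 'v \<Rightarrow> bool) \<Rightarrow> nat \<Rightarrow> bool" where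
  "has_directed_cycle V A k \<longleftrightarrow>
     (\<exists>xs. length xs = k \<and> k \<ge> 1 \<and> distinct xs \<and> set xs \<subseteq> V \<and>
        (\<forall>i < k. A (xs ! i) (xs ! ((i + 1) mod k))) \<and>
        (\<forall>v \<in> set xs. card {w \<in> set xs. A v w} = 1 \<and> card {u \<in> set xs. A u v} = 1))"

end

theory Submission
  imports Defs "HOL-Number_Theory.Cong"
begin

text \<open>
  Reduced modulo \<open>p\<close>, the matrix \<open>M\<close> acts as a linear map \<open>T\<close> on \<open>F\<^sub>p\<^sup>m\<close>, and \<open>k\<close> is the
  order of \<open>T\<close>. The orbit of a vector whose period is exactly \<open>k\<close> is a directed \<open>k\<close>-cycle,
  so it suffices to find such a vector. More generally, every \<open>T\<close>-invariant subspace \<open>U\<close>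
  contains a vector whose period is the order \<open>K\<close> of \<open>T\<close> on \<open>U\<close>; this is proved by induction
  on \<open>|U|\<close>. If \<open>T\<^bsup>K/q\<^esup>\<close> fixes a nonzero vector for some prime \<open>q \<noteq> p\<close> dividing \<open>K\<close>, then
  \<open>q\<close> is invertible modulo \<open>p\<close>, and the average of \<open>T\<^bsup>l K/q\<^esup>\<close> over \<open>l < q\<close> splits \<open>U\<close> into the
  fixed space of \<open>T\<^bsup>K/q\<^esup>\<close> and an invariant complement, both proper; the sum of
  full-period vectors of the two summands has full period in \<open>U\<close>. Otherwise a vector not
  fixed by \<open>T\<^bsup>K/p\<^esup>\<close> (if \<open>p\<close> divides \<open>K\<close>), or any nonzero vector (if not), is fixed by
  no \<open>T\<^bsup>K/q\<^esup>\<close> with \<open>q\<close> a prime divisor of \<open>K\<close>, and therefore has period \<open>K\<close>.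
\<close>

lemma funpow_mod_period: "(f ^^ k) x = x \<Longrightarrow> (f ^^ i) x = (f ^^ (i mod k)) x"
proof -
  assume x_k: "(f ^^ k) x = x"
  have "(f ^^ (n * k)) x = x" for n
    by (induction n) (simp_all add: funpow_add x_k)
  then have "(f ^^ (i mod k + i div k * k)) x = (f ^^ (i mod k)) x"
    by (simp only: funpow_add comp_apply)
  then show ?thesis
    by simp
qed

lemma distinct_orbit:
  assumes x_k: "(f ^^ k) x = x" and x_min: "\<And>j. 0 < j \<Longrightarrow> j < k \<Longrightarrow> (f ^^ j) x \<noteq> x"
  shows "distinct (map (\<lambda>i. (f ^^ i) x) [0..<k])"
proof -
  have "(f ^^ i) x \<noteq> (f ^^ j) x" if "i < j" "j < k" for i j
  proof
    assume "(f ^^ i) x = (f ^^ j) x"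
    then have "(f ^^ (k - j + i)) x = (f ^^ (k - j + j)) x"
      by (simp add: funpow_add)
    moreover have "k - j + j = k" "0 < k - j + i" "k - j + i < k"
      using that by auto
    ultimately show False
      using x_min x_k by metis
  qed
  then show ?thesis
    unfolding distinct_conv_nth by (auto simp: nat_neq_iff) (metis order.strict_trans)
qed

lemma image_orbit:
  assumes k: "0 < k" and x_k: "(f ^^ k) x = x"
  shows "f ` range (\<lambda>i. (f ^^ i) x) = range (\<lambda>i. (f ^^ i) x)"
proof -
  have "(f ^^ i) x = f ((f ^^ (i + k - 1)) x)" for i
  proof -
    have "f ((f ^^ (i + k - 1)) x) = (f ^^ Suc (i + k - 1)) x"
      by simp
    also have "Suc (i + k - 1) = i + k"
      using k by simp
    also have "(f ^^ (i + k)) x = (f ^^ i) x"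
      using funpow_mod_period[OF x_k, of i] funpow_mod_period[OF x_k, of "i + k"] by simp
    finally show ?thesis ..
  qed
  then have "range (\<lambda>i. (f ^^ i) x) \<subseteq> f ` range (\<lambda>i. (f ^^ i) x)"
    by blast
  moreover have "f ` range (\<lambda>i. (f ^^ i) x) \<subseteq> range (\<lambda>i. (f ^^ i) x)"
    by (auto intro: range_eqI[of _ _ "Suc _"])
  ultimately show ?thesis
    by blast
qed

lemma has_directed_cycle_orbit:
  assumes f_V: "\<And>y. y \<in> V \<Longrightarrow> f y \<in> V" and x: "x \<in> V" and k: "0 < k"
    and x_k: "(f ^^ k) x = x" and x_min: "\<And>j. 0 < j \<Longrightarrow> j < k \<Longrightarrow> (f ^^ j) x \<noteq> x"
  shows "has_directed_cycle V (\<lambda>y z. y \<in> V \<and> z \<in> V \<and> z = f y) k"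
proof -
  define xs where "xs = map (\<lambda>i. (f ^^ i) x) [0..<k]"
  have set_xs: "set xs = range (\<lambda>i. (f ^^ i) x)"
    unfolding xs_def using k
    by (auto simp: image_iff intro: exI[of _ "_ mod k"] funpow_mod_period[OF x_k])
  have step: "f (xs ! i) = xs ! ((i + 1) mod k)" if "i < k" for i
    using that k funpow_mod_period[OF x_k, of "Suc i"] by (simp add: xs_def)
  have image_xs: "f ` set xs = set xs"
    unfolding set_xs using image_orbit[OF k x_k] .
  then have "inj_on f (set xs)"
    by (simp add: eq_card_imp_inj_on)
  have xs_V: "set xs \<subseteq> V"
  proof -
    have "(f ^^ i) x \<in> V" for i
      by (induction i) (simp_all add: x f_V)
    then show ?thesis
      unfolding set_xs by blast
  qed
  have arc_iff: "(y \<in> V \<and> z \<in> V \<and> z = f y) \<longleftrightarrow> z = f y" if "y \<in> set xs" "z \<in> set xs" for y z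
    using xs_V that by auto
  have deg: "card {w \<in> set xs. v \<in> V \<and> w \<in> V \<and> w = f v} = 1
      \<and> card {u \<in> set xs. u \<in> V \<and> v \<in> V \<and> v = f u} = 1" if "v \<in> set xs" for v
  proof -
    have "f v \<in> set xs"
      using image_xs that by blast
    then have "{w \<in> set xs. v \<in> V \<and> w \<in> V \<and> w = f v} = {f v}"
      using arc_iff that by blast
    moreover have "v \<in> f ` set xs"
      using image_xs that by simp
    then obtain u where u: "u \<in> set xs" "v = f u"
      by blast
    then have "{u \<in> set xs. u \<in> V \<and> v \<in> V \<and> v = f u} = {u}"
      using \<open>inj_on f (set xs)\<close> arc_iff that by (auto simp: inj_on_eq_iff)
    ultimately show ?thesis
      by simp
  qed
  show ?thesis
    unfolding has_directed_cycle_def using distinct_orbit[OF x_k x_min] xs_V step deg k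
    by (intro exI[of _ xs]) (auto simp: xs_def)
qed

lemma proper_divisor_dvd_prime_cofactor:
  fixes d n :: nat
  assumes "d dvd n" "d \<noteq> n" "0 < n"
  shows "\<exists>q. prime q \<and> q dvd n \<and> d dvd n div q"
proof -
  obtain t where n: "n = d * t"
    using assms(1) by blast
  then have "t \<noteq> 1"
    using assms(2) by auto
  then obtain q where q: "prime q" "q dvd t"
    using prime_factor_nat by blast
  then have "n div q = d * (t div q)"
    using n by (simp add: div_mult_swap)
  then show ?thesis
    using q n by auto
qed

locale int_mat_mod_prime =
  fixes m :: nat and M :: "int mat" and p :: nat
  assumes M_carrier: "M \<in> carrier_mat m m" and prime_p: "prime p"
begin

abbreviation V :: "int vec set" where
  "V \<equiv> carrier_vec m"

abbreviation Zn :: "int vec set" where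
  "Zn \<equiv> Zn_vecs m (int p)"

definition T :: "int vec \<Rightarrow> int vec" where
  "T u = M *\<^sub>v u"

definition cong_vec :: "int vec \<Rightarrow> int vec \<Rightarrow> bool" (infix "\<approx>" 50) where
  "u \<approx> v \<longleftrightarrow> (\<forall>i<m. [u $ i = v $ i] (mod int p))"

definition reduce :: "int vec \<Rightarrow> int vec" where
  "reduce u = vec m (\<lambda>i. u $ i mod int p)"

lemma p_pos: "0 < int p"
  using prime_gt_0_nat[OF prime_p] by simp

lemma cong_vec_refl [simp]: "u \<approx> u"
  by (simp add: cong_vec_def)

lemma cong_vec_sym: "u \<approx> v \<Longrightarrow> v \<approx> u"
  by (simp add: cong_vec_def cong_sym_eq)

lemma cong_vec_trans [trans]: "u \<approx> v \<Longrightarrow> v \<approx> w \<Longrightarrow> u \<approx> w"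
  unfolding cong_vec_def by (meson cong_trans)

lemma cong_vec_iff_dvd: "u \<approx> v \<longleftrightarrow> (\<forall>i<m. int p dvd u $ i - v $ i)"
  by (simp add: cong_vec_def cong_iff_dvd_diff)

lemma cong_vec_add:
  assumes "u \<in> V" "v \<in> V" "u' \<in> V" "v' \<in> V" "u \<approx> u'" "v \<approx> v'"
  shows "u + v \<approx> u' + v'"
  using assms by (auto simp: cong_vec_def intro: cong_add)

lemma cong_vec_diff:
  assumes "u \<in> V" "v \<in> V" "u' \<in> V" "v' \<in> V" "u \<approx> u'" "v \<approx> v'"
  shows "u - v \<approx> u' - v'"
  using assms by (auto simp: cong_vec_def intro: cong_diff)

lemma cong_vec_smult: "u \<in> V \<Longrightarrow> u' \<in> V \<Longrightarrow> u \<approx> u' \<Longrightarrow> c \<cdot>\<^sub>v u \<approx> c \<cdot>\<^sub>v u'"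
  by (auto simp: cong_vec_def intro: cong_scalar_left)

lemma cong_vec_iff_diff: "u \<in> V \<Longrightarrow> v \<in> V \<Longrightarrow> u \<approx> v \<longleftrightarrow> u - v \<approx> 0\<^sub>v m"
  by (simp add: cong_vec_iff_dvd)

lemma cong_vec_imp_multiple:
  assumes "u \<in> V" "v \<in> V" "u \<approx> v"
  shows "u = v + int p \<cdot>\<^sub>v vec m (\<lambda>i. (u $ i - v $ i) div int p)"
  using assms by (intro eq_vecI) (auto simp: cong_vec_iff_dvd)

lemma reduce_Zn: "reduce u \<in> Zn"
  using p_pos by (simp add: reduce_def Zn_vecs_def)

lemma Zn_subset_V: "Zn \<subseteq> V"
  unfolding Zn_vecs_def by (auto intro: carrier_vecI)

lemma reduce_cong: "reduce u \<approx> u"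
  unfolding reduce_def cong_vec_def cong_def by simp

lemma reduce_eq_iff: "u \<in> V \<Longrightarrow> v \<in> V \<Longrightarrow> reduce u = reduce v \<longleftrightarrow> u \<approx> v"
  unfolding reduce_def cong_vec_def cong_def by (auto simp: vec_eq_iff)

lemma reduce_Zn_id: "x \<in> Zn \<Longrightarrow> reduce x = x"
  unfolding Zn_vecs_def reduce_def by (intro eq_vecI) auto

lemma finite_Zn: "finite Zn"
proof -
  have "Zn \<subseteq> vec_of_list ` {xs. set xs \<subseteq> {0..<int p} \<and> length xs = m}"
  proof
    fix x assume x: "x \<in> Zn"
    then have "set (list_of_vec x) \<subseteq> {0..<int p}" "length (list_of_vec x) = m"
      unfolding Zn_vecs_def by (auto simp: in_set_conv_nth)
    then show "x \<in> vec_of_list ` {xs. set xs \<subseteq> {0..<int p} \<and> length xs = m}"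
      using vec_list[of x] by (metis (mono_tags, lifting) image_eqI mem_Collect_eq)
  qed
  then show ?thesis
    by (rule finite_subset) (simp add: finite_lists_length_eq)
qed

lemma T_carrier [simp]: "u \<in> V \<Longrightarrow> T u \<in> V"
  using M_carrier by (simp add: T_def)

lemma T_funpow_carrier [simp]: "u \<in> V \<Longrightarrow> (T ^^ j) u \<in> V"
  by (induction j) simp_all

lemma T_funpow_dim [simp]: "u \<in> V \<Longrightarrow> dim_vec ((T ^^ j) u) = m"
  using T_funpow_carrier carrier_vecD by blast

lemma T_cong: "u \<in> V \<Longrightarrow> v \<in> V \<Longrightarrow> u \<approx> v \<Longrightarrow> T u \<approx> T v"
  using M_carrier unfolding cong_vec_def T_def
  by (auto simp: scalar_prod_def intro!: cong_sum cong_scalar_left)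

definition T_linear :: "(int vec \<Rightarrow> int vec) \<Rightarrow> bool" where
  "T_linear F \<longleftrightarrow> (\<forall>u\<in>V. F u \<in> V) \<and> (\<forall>u\<in>V. \<forall>v\<in>V. F (u + v) = F u + F v)
     \<and> (\<forall>c. \<forall>u\<in>V. F (c \<cdot>\<^sub>v u) = c \<cdot>\<^sub>v F u) \<and> (\<forall>u\<in>V. F (T u) = T (F u))"

lemma T_linearI:
  assumes "\<And>u. u \<in> V \<Longrightarrow> F u \<in> V" "\<And>u v. u \<in> V \<Longrightarrow> v \<in> V \<Longrightarrow> F (u + v) = F u + F v"
    "\<And>c u. u \<in> V \<Longrightarrow> F (c \<cdot>\<^sub>v u) = c \<cdot>\<^sub>v F u" "\<And>u. u \<in> V \<Longrightarrow> F (T u) = T (F u)"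
  shows "T_linear F"
  using assms by (simp add: T_linear_def)

context
  fixes F assumes F: "T_linear F"
begin

lemma T_linear_carrier [simp]: "u \<in> V \<Longrightarrow> F u \<in> V"
  using F by (simp add: T_linear_def)

lemma T_linear_add: "u \<in> V \<Longrightarrow> v \<in> V \<Longrightarrow> F (u + v) = F u + F v"
  using F by (simp add: T_linear_def)

lemma T_linear_smult: "u \<in> V \<Longrightarrow> F (c \<cdot>\<^sub>v u) = c \<cdot>\<^sub>v F u"
  using F by (simp add: T_linear_def)

lemma T_linear_commute: "u \<in> V \<Longrightarrow> F (T u) = T (F u)"
  using F by (simp add: T_linear_def)

lemma T_linear_commute_funpow: "u \<in> V \<Longrightarrow> F ((T ^^ j) u) = (T ^^ j) (F u)"
  by (induction j) (simp_all add: T_linear_commute)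

lemma T_linear_zero [simp]: "F (0\<^sub>v m) = 0\<^sub>v m"
proof -
  have dim: "dim_vec (F (0\<^sub>v m)) = m"
    using T_linear_carrier[of "0\<^sub>v m"] by simp
  have "0 \<cdot>\<^sub>v 0\<^sub>v m = (0\<^sub>v m :: int vec)" "0 \<cdot>\<^sub>v F (0\<^sub>v m) = 0\<^sub>v m"
    by (auto simp: dim intro!: eq_vecI)
  then show ?thesis
    using T_linear_smult[of "0\<^sub>v m" 0] by simp
qed

lemma T_linear_diff: "u \<in> V \<Longrightarrow> v \<in> V \<Longrightarrow> F (u - v) = F u - F v"
proof -
  assume uv: "u \<in> V" "v \<in> V"
  have "u - v = u + (-1) \<cdot>\<^sub>v v" "F u - F v = F u + (-1) \<cdot>\<^sub>v F v"
    using uv by (auto intro!: eq_vecI)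
  then show ?thesis
    using uv by (simp add: T_linear_add T_linear_smult)
qed

lemma T_linear_cong: "u \<in> V \<Longrightarrow> v \<in> V \<Longrightarrow> u \<approx> v \<Longrightarrow> F u \<approx> F v"
proof -
  assume uv: "u \<in> V" "v \<in> V" "u \<approx> v"
  define w where "w = vec m (\<lambda>i. (u $ i - v $ i) div int p)"
  have w: "w \<in> V"
    by (simp add: w_def)
  have "F u = F (v + int p \<cdot>\<^sub>v w)"
    using cong_vec_imp_multiple[OF uv] by (simp add: w_def)
  also have "\<dots> = F v + int p \<cdot>\<^sub>v F w"
    using uv w by (simp add: T_linear_add T_linear_smult)
  finally have "F u = F v + int p \<cdot>\<^sub>v F w" .
  moreover have "dim_vec (F v) = m" "dim_vec (F w) = m"
    using uv w by simp_all
  ultimately show ?thesis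
    by (simp add: cong_vec_iff_dvd)
qed

end

lemma T_linear_T: "T_linear T"
  using M_carrier
  by (intro T_linearI) (auto simp: T_def mult_add_distrib_mat_vec intro!: eq_vecI)

lemma T_linear_id: "T_linear (\<lambda>u. u)"
  by (intro T_linearI) simp_all

lemma T_linear_comp: "T_linear F \<Longrightarrow> T_linear G \<Longrightarrow> T_linear (F \<circ> G)"
  by (intro T_linearI) (simp_all add: T_linear_add T_linear_smult T_linear_commute)

lemma T_linear_funpow: "T_linear (T ^^ j)"
proof (induction j)
  case 0
  show ?case
    using T_linear_id by simp
next
  case (Suc j)
  show ?case
    using T_linear_comp[OF T_linear_T Suc] by (simp add: comp_def)
qed

lemma T_linear_zero_map: "T_linear (\<lambda>_. 0\<^sub>v m)"
  using T_linear_zero[OF T_linear_T] by (intro T_linearI) (auto intro!: eq_vecI)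

lemma T_linear_plus:
  assumes F: "T_linear F" and G: "T_linear G"
  shows "T_linear (\<lambda>u. F u + G u)"
proof (intro T_linearI)
  fix u v assume uv: "u \<in> V" "v \<in> V"
  then have dims: "dim_vec (F u) = m" "dim_vec (F v) = m" "dim_vec (G u) = m" "dim_vec (G v) = m"
    using F G by simp_all
  show "F (u + v) + G (u + v) = F u + G u + (F v + G v)"
    using F G uv by (intro eq_vecI) (simp_all add: T_linear_add dims)
next
  fix c :: int and u assume "u \<in> V"
  then show "F (c \<cdot>\<^sub>v u) + G (c \<cdot>\<^sub>v u) = c \<cdot>\<^sub>v (F u + G u)"
    using F G by (simp add: T_linear_smult smult_add_distrib_vec[of _ m])
next
  fix u assume "u \<in> V"
  then show "F (T u) + G (T u) = T (F u + G u)"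
    using F G by (simp add: T_linear_commute T_linear_add[OF T_linear_T])
qed (use F G in simp)

lemma T_linear_scale:
  assumes F: "T_linear F"
  shows "T_linear (\<lambda>u. c \<cdot>\<^sub>v F u)"
proof (intro T_linearI)
  fix u v assume "u \<in> V" "v \<in> V"
  then show "c \<cdot>\<^sub>v F (u + v) = c \<cdot>\<^sub>v F u + c \<cdot>\<^sub>v F v"
    using F by (simp add: T_linear_add smult_add_distrib_vec[of _ m])
next
  fix d :: int and u assume "u \<in> V"
  then show "c \<cdot>\<^sub>v F (d \<cdot>\<^sub>v u) = d \<cdot>\<^sub>v (c \<cdot>\<^sub>v F u)"
    using F by (simp add: T_linear_smult smult_smult_assoc mult.commute)
next
  fix u assume "u \<in> V"
  then show "c \<cdot>\<^sub>v F (T u) = T (c \<cdot>\<^sub>v F u)"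
    using F by (simp add: T_linear_commute T_linear_smult[OF T_linear_T])
qed (use F in simp)

text \<open>A \<open>T\<close>-invariant subspace of \<open>F\<^sub>p\<^sup>m\<close> is represented by its preimage in \<open>\<int>\<^sup>m\<close>, which is
  why invariant subspaces are closed under congruence.\<close>

definition invariant_subspace :: "int vec set \<Rightarrow> bool" where
  "invariant_subspace U \<longleftrightarrow> U \<subseteq> V \<and> 0\<^sub>v m \<in> U \<and> (\<forall>u\<in>U. \<forall>v\<in>U. u + v \<in> U)
     \<and> (\<forall>c. \<forall>u\<in>U. c \<cdot>\<^sub>v u \<in> U) \<and> (\<forall>u\<in>U. T u \<in> U) \<and> (\<forall>u\<in>U. \<forall>v\<in>V. u \<approx> v \<longrightarrow> v \<in> U)"

lemma invariant_subspaceI: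
  assumes "U \<subseteq> V" "0\<^sub>v m \<in> U" "\<And>u v. u \<in> U \<Longrightarrow> v \<in> U \<Longrightarrow> u + v \<in> U"
    "\<And>c u. u \<in> U \<Longrightarrow> c \<cdot>\<^sub>v u \<in> U" "\<And>u. u \<in> U \<Longrightarrow> T u \<in> U"
    "\<And>u v. u \<in> U \<Longrightarrow> v \<in> V \<Longrightarrow> u \<approx> v \<Longrightarrow> v \<in> U"
  shows "invariant_subspace U"
  using assms by (auto simp: invariant_subspace_def)

context
  fixes U assumes U: "invariant_subspace U"
begin

lemma subspace_carrier: "U \<subseteq> V"
  using U by (simp add: invariant_subspace_def)

lemma subspace_zero: "0\<^sub>v m \<in> U"
  using U by (simp add: invariant_subspace_def)

lemma subspace_add: "u \<in> U \<Longrightarrow> v \<in> U \<Longrightarrow> u + v \<in> U"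
  using U by (simp add: invariant_subspace_def)

lemma subspace_smult: "u \<in> U \<Longrightarrow> c \<cdot>\<^sub>v u \<in> U"
  using U by (simp add: invariant_subspace_def)

lemma subspace_T: "u \<in> U \<Longrightarrow> T u \<in> U"
  using U by (simp add: invariant_subspace_def)

lemma subspace_cong: "u \<in> U \<Longrightarrow> v \<in> V \<Longrightarrow> u \<approx> v \<Longrightarrow> v \<in> U"
  using U by (auto simp: invariant_subspace_def)

lemma subspace_funpow: "u \<in> U \<Longrightarrow> (T ^^ j) u \<in> U"
  by (induction j) (simp_all add: subspace_T)

lemma subspace_diff: "u \<in> U \<Longrightarrow> v \<in> U \<Longrightarrow> u - v \<in> U"
proof -
  assume uv: "u \<in> U" "v \<in> U"
  then have "u - v = u + (-1) \<cdot>\<^sub>v v"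
    using subspace_carrier by (auto intro!: eq_vecI)
  then show ?thesis
    using uv by (simp add: subspace_add subspace_smult)
qed

end

lemma invariant_subspace_V: "invariant_subspace V"
  by (intro invariant_subspaceI) simp_all

lemma invariant_subspace_equalizer:
  assumes U: "invariant_subspace U" and F: "T_linear F" and G: "T_linear G"
  shows "invariant_subspace {u \<in> U. F u \<approx> G u}" (is "invariant_subspace ?E")
proof (intro invariant_subspaceI)
  show "?E \<subseteq> V" "0\<^sub>v m \<in> ?E"
    using subspace_carrier[OF U] subspace_zero[OF U] F G by auto
next
  fix u v assume "u \<in> ?E" "v \<in> ?E"
  moreover from this have "u \<in> V" "v \<in> V"
    using subspace_carrier[OF U] by auto
  ultimately show "u + v \<in> ?E"
    using F G subspace_add[OF U] by (simp add: T_linear_add cong_vec_add)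
next
  fix c :: int and u assume "u \<in> ?E"
  moreover from this have "u \<in> V"
    using subspace_carrier[OF U] by auto
  ultimately show "c \<cdot>\<^sub>v u \<in> ?E"
    using F G subspace_smult[OF U] by (simp add: T_linear_smult cong_vec_smult)
next
  fix u assume "u \<in> ?E"
  moreover from this have "u \<in> V"
    using subspace_carrier[OF U] by auto
  ultimately show "T u \<in> ?E"
    using F G subspace_T[OF U] by (simp add: T_linear_commute T_cong)
next
  fix u v assume u: "u \<in> ?E" and v: "v \<in> V" "u \<approx> v"
  have uV: "u \<in> V"
    using u subspace_carrier[OF U] by auto
  have "F v \<approx> F u"
    using T_linear_cong[OF F v(1) uV cong_vec_sym[OF v(2)]] .
  also have "F u \<approx> G u"
    using u by simp
  also have "G u \<approx> G v"
    using T_linear_cong[OF G uV v] .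
  finally show "v \<in> ?E"
    using u v subspace_cong[OF U] by blast
qed

definition is_period :: "nat \<Rightarrow> int vec set \<Rightarrow> bool" where
  "is_period j U \<longleftrightarrow> (\<forall>u\<in>U. (T ^^ j) u \<approx> u)"

definition period :: "int vec set \<Rightarrow> nat" where
  "period U = (LEAST j. 0 < j \<and> is_period j U)"

lemma is_period_subset: "A \<subseteq> U \<Longrightarrow> is_period j U \<Longrightarrow> is_period j A"
  by (auto simp: is_period_def)

lemma is_period_add:
  assumes "U \<subseteq> V" "is_period a U" "is_period b U"
  shows "is_period (a + b) U"
  unfolding is_period_def
proof
  fix u assume u: "u \<in> U"
  then have "(T ^^ a) ((T ^^ b) u) \<approx> (T ^^ a) u"
    using assms by (intro T_linear_cong[OF T_linear_funpow]) (auto simp: is_period_def)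
  also have "(T ^^ a) u \<approx> u"
    using assms u by (auto simp: is_period_def)
  finally show "(T ^^ (a + b)) u \<approx> u"
    by (simp add: funpow_add)
qed

lemma is_period_diff:
  assumes "U \<subseteq> V" "is_period (a + b) U" "is_period b U"
  shows "is_period a U"
  unfolding is_period_def
proof
  fix u assume u: "u \<in> U"
  then have "(T ^^ a) u \<approx> (T ^^ a) ((T ^^ b) u)"
    using assms by (intro T_linear_cong[OF T_linear_funpow]) (auto simp: is_period_def cong_vec_sym)
  also have "(T ^^ a) ((T ^^ b) u) \<approx> u"
    using assms u by (auto simp: is_period_def funpow_add)
  finally show "(T ^^ a) u \<approx> u" .
qed

lemma is_period_mult: "U \<subseteq> V \<Longrightarrow> is_period a U \<Longrightarrow> is_period (n * a) U"
  by (induction n) (simp_all add: is_period_def is_period_add[unfolded is_period_def])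

lemma is_period_singleton_cong:
  assumes "u \<in> V" "v \<in> V" "u \<approx> v" "is_period j {u}"
  shows "is_period j {v}"
proof -
  have "(T ^^ j) v \<approx> (T ^^ j) u"
    using assms by (intro T_linear_cong[OF T_linear_funpow]) (auto simp: cong_vec_sym)
  also have "(T ^^ j) u \<approx> u"
    using assms by (simp add: is_period_def)
  also have "u \<approx> v"
    by fact
  finally show ?thesis
    by (simp add: is_period_def)
qed

lemma is_period_singleton_zero: "v \<in> V \<Longrightarrow> v \<approx> 0\<^sub>v m \<Longrightarrow> is_period j {v}"
  using is_period_singleton_cong[of "0\<^sub>v m" v] T_linear_zero[OF T_linear_funpow]
  by (simp add: is_period_def cong_vec_sym)

context
  fixes U K assumes U: "U \<subseteq> V" and K: "is_period K U" "0 < K"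
begin

lemma period_pos: "0 < period U"
  and is_period_period: "is_period (period U) U"
  using LeastI[of "\<lambda>j. 0 < j \<and> is_period j U" K] K by (simp_all add: period_def)

lemma not_is_period_below_period: "0 < j \<Longrightarrow> j < period U \<Longrightarrow> \<not> is_period j U"
  using not_less_Least[of j "\<lambda>j. 0 < j \<and> is_period j U"] by (simp add: period_def)

lemma is_period_iff_dvd: "is_period j U \<longleftrightarrow> period U dvd j"
proof
  assume j: "is_period j U"
  have "is_period (j div period U * period U) U"
    using is_period_mult[OF U is_period_period] .
  then have "is_period (j mod period U) U"
    using is_period_diff[OF U, of "j mod period U" "j div period U * period U"] j by simp
  then show "period U dvd j"
    using not_is_period_below_period[of "j mod period U"] period_pos
    by (meson dvd_eq_mod_eq_0 mod_less_divisor neq0_conv)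
next
  assume "period U dvd j"
  then show "is_period j U"
    using is_period_mult[OF U is_period_period] by (auto elim!: dvdE simp: mult.commute)
qed

end

lemma exists_vec_not_fixed_by_cofactor:
  assumes U: "U \<subseteq> V" and K: "is_period K U" "0 < K" and q: "1 < q" "q dvd period U"
  shows "\<exists>v\<in>U. \<not> is_period (period U div q) {v}"
proof -
  have "0 < period U div q" "period U div q < period U"
    using q period_pos[OF U K] by (auto simp: dvd_div_eq_0_iff intro: div_less_dividend)
  then show ?thesis
    using not_is_period_below_period[OF U K] by (auto simp: is_period_def)
qed

lemma card_Zn_less:
  assumes A: "invariant_subspace A" and U: "invariant_subspace U"
    and "A \<subseteq> U" "u \<in> U" "u \<notin> A"
  shows "card (A \<inter> Zn) < card (U \<inter> Zn)"
proof (rule psubset_card_mono)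
  show "finite (U \<inter> Zn)"
    using finite_Zn by simp
  have uV: "u \<in> V"
    using assms subspace_carrier[OF U] by auto
  have "reduce u \<in> U"
    using subspace_cong[OF U \<open>u \<in> U\<close>] reduce_Zn Zn_subset_V reduce_cong cong_vec_sym by blast
  moreover have "reduce u \<notin> A"
    using subspace_cong[OF A _ uV reduce_cong] \<open>u \<notin> A\<close> by blast
  ultimately show "A \<inter> Zn \<subset> U \<inter> Zn"
    using \<open>A \<subseteq> U\<close> reduce_Zn by blast
qed

definition is_direct_sum :: "int vec set \<Rightarrow> int vec set \<Rightarrow> int vec set \<Rightarrow> bool" where
  "is_direct_sum U A B \<longleftrightarrow> A \<subseteq> U \<and> B \<subseteq> U \<and> (\<forall>u\<in>U. \<exists>a\<in>A. \<exists>b\<in>B. u = a + b)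
     \<and> (\<forall>w\<in>A \<inter> B. w \<approx> 0\<^sub>v m)"

definition full_period_vec :: "int vec set \<Rightarrow> int vec \<Rightarrow> bool" where
  "full_period_vec U v \<longleftrightarrow> v \<in> U \<and> (\<forall>j. is_period j {v} \<longrightarrow> is_period j U)"

lemma is_period_direct_summands:
  assumes A: "invariant_subspace A" and B: "invariant_subspace B"
    and AB: "\<forall>w\<in>A \<inter> B. w \<approx> 0\<^sub>v m" and a: "a \<in> A" and b: "b \<in> B"
    and j: "is_period j {a + b}"
  shows "is_period j {a}" "is_period j {b}"
proof -
  have aV: "a \<in> V" and bV: "b \<in> V"
    using a b subspace_carrier A B by auto
  define x where "x = (T ^^ j) a - a"
  define y where "y = (T ^^ j) b - b"
  have xA: "x \<in> A" and yB: "y \<in> B" and xV: "x \<in> V" and yV: "y \<in> V"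
    unfolding x_def y_def using a b aV bV A B by (simp_all add: subspace_diff subspace_funpow)
  have "(T ^^ j) (a + b) - (a + b) = x + y"
    unfolding x_def y_def using aV bV
    by (auto simp: T_linear_add[OF T_linear_funpow] intro!: eq_vecI)
  moreover have "(T ^^ j) (a + b) - (a + b) \<approx> 0\<^sub>v m"
    using j aV bV cong_vec_iff_diff[of "(T ^^ j) (a + b)" "a + b"] by (simp add: is_period_def)
  ultimately have xy: "\<forall>i<m. int p dvd x $ i + y $ i"
    using xV yV by (simp add: cong_vec_iff_dvd)
  then have "0\<^sub>v m - y \<approx> x"
    using xV yV unfolding cong_vec_iff_dvd
    by (simp add: carrier_vecD) (metis add.commute dvd_minus_iff minus_diff_eq diff_minus_eq_add)
  moreover have "0\<^sub>v m - y \<in> B"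
    using B yB by (simp add: subspace_diff subspace_zero)
  ultimately have "x \<in> B"
    using subspace_cong[OF B] xV by blast
  then have x0: "x \<approx> 0\<^sub>v m"
    using AB xA by blast
  then show "is_period j {a}"
    unfolding x_def is_period_def using aV cong_vec_iff_diff[of "(T ^^ j) a" a] by simp
  have "y \<approx> 0\<^sub>v m"
    using x0 xy xV yV unfolding cong_vec_iff_dvd
    by (simp add: carrier_vecD) (metis add_diff_cancel_left' dvd_diff)
  then show "is_period j {b}"
    unfolding y_def is_period_def using bV cong_vec_iff_diff[of "(T ^^ j) b" b] by simp
qed

lemma full_period_vec_direct_sum:
  assumes U: "invariant_subspace U" and A: "invariant_subspace A" and B: "invariant_subspace B"
    and UAB: "is_direct_sum U A B" and a: "full_period_vec A a" and b: "full_period_vec B b"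
  shows "full_period_vec U (a + b)"
proof -
  have AU: "A \<subseteq> U" and BU: "B \<subseteq> U" and AB: "\<forall>w\<in>A \<inter> B. w \<approx> 0\<^sub>v m"
    and decomp: "\<forall>u\<in>U. \<exists>a\<in>A. \<exists>b\<in>B. u = a + b"
    using UAB by (simp_all add: is_direct_sum_def)
  have aA: "a \<in> A" and bB: "b \<in> B"
    using a b by (simp_all add: full_period_vec_def)
  have "is_period j U" if j: "is_period j {a + b}" for j
  proof -
    have "is_period j {a}" "is_period j {b}"
      using is_period_direct_summands[OF A B AB aA bB j] by simp_all
    then have "is_period j A" "is_period j B"
      using a b by (simp_all add: full_period_vec_def)
    show ?thesis
      unfolding is_period_def
    proof
      fix u assume "u \<in> U"
      then obtain a' b' where ab': "a' \<in> A" "b' \<in> B" "u = a' + b'"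
        using decomp by blast
      then have "a' \<in> V" "b' \<in> V"
        using subspace_carrier A B by auto
      then have "(T ^^ j) a' + (T ^^ j) b' \<approx> a' + b'"
        using \<open>is_period j A\<close> \<open>is_period j B\<close> ab' by (intro cong_vec_add) (simp_all add: is_period_def)
      then show "(T ^^ j) u \<approx> u"
        using ab' \<open>a' \<in> V\<close> \<open>b' \<in> V\<close> by (simp add: T_linear_add[OF T_linear_funpow])
    qed
  qed
  moreover have "a + b \<in> U"
    using AU BU aA bB subspace_add[OF U] by blast
  ultimately show ?thesis
    by (simp add: full_period_vec_def)
qed

primrec orbit_sum :: "nat \<Rightarrow> nat \<Rightarrow> int vec \<Rightarrow> int vec" where
  "orbit_sum j 0 u = 0\<^sub>v m"
| "orbit_sum j (Suc q) u = orbit_sum j q u + (T ^^ (q * j)) u"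

lemma T_linear_orbit_sum: "T_linear (orbit_sum j q)"
  by (induction q) (simp_all add: T_linear_zero_map T_linear_plus T_linear_funpow)

lemma orbit_sum_index: "u \<in> V \<Longrightarrow> i < m \<Longrightarrow> orbit_sum j q u $ i = (\<Sum>l<q. (T ^^ (l * j)) u $ i)"
proof (induction q)
  case (Suc q)
  have "dim_vec (orbit_sum j q u) = m"
    using T_linear_carrier[OF T_linear_orbit_sum Suc.prems(1)] by simp
  then show ?case
    using Suc by simp
qed simp

lemma orbit_sum_mem: "invariant_subspace U \<Longrightarrow> u \<in> U \<Longrightarrow> orbit_sum j q u \<in> U"
  by (induction q) (simp_all add: subspace_zero subspace_add subspace_funpow)

text \<open>Telescoping: \<open>T\<^sup>j\<close> shifts the summands \<open>T\<^bsup>l j\<^esup> u\<close>, \<open>l < q\<close>, by one place.\<close>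

lemma orbit_sum_shift:
  assumes u: "u \<in> V" and period: "(T ^^ (q * j)) u \<approx> u"
  shows "(T ^^ j) (orbit_sum j q u) \<approx> orbit_sum j q u"
  unfolding cong_vec_iff_dvd
proof (intro allI impI)
  fix i assume i: "i < m"
  define x where "x l = (T ^^ (l * j)) u $ i" for l
  have "(T ^^ (Suc l * j)) u = (T ^^ (l * j)) ((T ^^ j) u)" for l
    using funpow_add[of "l * j" j T] by (simp add: add.commute)
  then have "(T ^^ j) (orbit_sum j q u) $ i = (\<Sum>l<q. x (Suc l))"
    using T_linear_commute_funpow[OF T_linear_orbit_sum u, symmetric] u i
    by (simp add: orbit_sum_index x_def)
  moreover have "orbit_sum j q u $ i = (\<Sum>l<q. x l)"
    using u i by (simp add: orbit_sum_index x_def)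
  moreover have "(\<Sum>l<q. x (Suc l)) - (\<Sum>l<q. x l) = x q - x 0"
    using sum.lessThan_Suc_shift[of x q] sum.lessThan_Suc[of x q] by simp
  moreover have "int p dvd x q - x 0"
    using period i by (simp add: x_def cong_vec_iff_dvd)
  ultimately show "int p dvd (T ^^ j) (orbit_sum j q u) $ i - orbit_sum j q u $ i"
    by simp
qed

lemma orbit_sum_fixed:
  assumes u: "u \<in> V" and fixed: "(T ^^ j) u \<approx> u"
  shows "orbit_sum j q u \<approx> int q \<cdot>\<^sub>v u"
proof (induction q)
  case (Suc q)
  have "(T ^^ (q * j)) u \<approx> u"
    using is_period_mult[of "{u}" j q] u fixed by (simp add: is_period_def)
  then have "orbit_sum j q u + (T ^^ (q * j)) u \<approx> int q \<cdot>\<^sub>v u + u"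
    using Suc u T_linear_carrier[OF T_linear_orbit_sum u] by (intro cong_vec_add) simp_all
  moreover have "int q \<cdot>\<^sub>v u + u = int (Suc q) \<cdot>\<^sub>v u"
    using u by (auto simp: algebra_simps intro!: eq_vecI)
  ultimately show ?case
    by simp
qed (use u in \<open>auto simp: cong_vec_def carrier_vecD\<close>)

lemma averaged_orbit_sum_fixed:
  assumes c: "[int q * c = 1] (mod int p)" and u: "u \<in> V" "(T ^^ j) u \<approx> u"
  shows "c \<cdot>\<^sub>v orbit_sum j q u \<approx> u"
proof -
  have "c \<cdot>\<^sub>v orbit_sum j q u \<approx> c \<cdot>\<^sub>v (int q \<cdot>\<^sub>v u)"
    using u T_linear_carrier[OF T_linear_orbit_sum] by (intro cong_vec_smult orbit_sum_fixed) simp_all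
  also have "c \<cdot>\<^sub>v (int q \<cdot>\<^sub>v u) \<approx> u"
  proof -
    have "[int q * c * u $ i = 1 * u $ i] (mod int p)" for i
      using c by (rule cong_scalar_right)
    then show ?thesis
      using u(1) by (simp add: cong_vec_def carrier_vecD algebra_simps)
  qed
  finally show ?thesis .
qed

lemma projection_direct_sum:
  assumes U: "invariant_subspace U" and "A \<subseteq> U" and P: "T_linear P"
    and P_range: "\<And>u. u \<in> U \<Longrightarrow> P u \<in> A" and P_id: "\<And>a. a \<in> A \<Longrightarrow> P a \<approx> a"
  shows "is_direct_sum U A {u \<in> U. P u \<approx> 0\<^sub>v m}"
  unfolding is_direct_sum_def
proof (intro conjI ballI)
  show "A \<subseteq> U" "{u \<in> U. P u \<approx> 0\<^sub>v m} \<subseteq> U"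
    using \<open>A \<subseteq> U\<close> by auto
next
  fix u assume u: "u \<in> U"
  then have uV: "u \<in> V" and PuA: "P u \<in> A" and PuV: "P u \<in> V"
    using subspace_carrier[OF U] P_range P by auto
  have "P (u - P u) = P u - P (P u)"
    using uV PuV P by (simp add: T_linear_diff)
  also have "\<dots> \<approx> P u - P u"
    using PuA PuV P P_id by (intro cong_vec_diff) (simp_all add: cong_vec_sym)
  also have "P u - P u = 0\<^sub>v m"
    using PuV by (auto intro!: eq_vecI)
  finally have "u - P u \<in> {u \<in> U. P u \<approx> 0\<^sub>v m}"
    using u PuA \<open>A \<subseteq> U\<close> subspace_diff[OF U] by blast
  moreover have "u = P u + (u - P u)"
    using uV PuV by (auto intro!: eq_vecI)
  ultimately show "\<exists>a\<in>A. \<exists>b\<in>{u \<in> U. P u \<approx> 0\<^sub>v m}. u = a + b"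
    using PuA by blast
next
  fix w assume "w \<in> A \<inter> {u \<in> U. P u \<approx> 0\<^sub>v m}"
  then show "w \<approx> 0\<^sub>v m"
    using P_id cong_vec_sym cong_vec_trans by blast
qed

lemma fixed_part_has_complement:
  assumes U: "invariant_subspace U" and period: "is_period (q * j) U" and "coprime q p"
  shows "\<exists>B. invariant_subspace B \<and> is_direct_sum U {u \<in> U. (T ^^ j) u \<approx> u} B"
proof -
  have "coprime (int q) (int p)"
    using \<open>coprime q p\<close> by simp
  then obtain c where c: "[int q * c = 1] (mod int p)"
    using cong_solve_coprime_int by blast
  define A where "A = {u \<in> U. (T ^^ j) u \<approx> u}"
  define P where "P u = c \<cdot>\<^sub>v orbit_sum j q u" for u
  have P: "T_linear P"
    unfolding P_def by (intro T_linear_scale T_linear_orbit_sum)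
  have "P u \<in> A" if "u \<in> U" for u
  proof -
    have uV: "u \<in> V"
      using that subspace_carrier[OF U] by auto
    have "(T ^^ j) (P u) = c \<cdot>\<^sub>v (T ^^ j) (orbit_sum j q u)"
      unfolding P_def using uV T_linear_carrier[OF T_linear_orbit_sum uV]
      by (simp add: T_linear_smult[OF T_linear_funpow])
    also have "\<dots> \<approx> P u"
      unfolding P_def using uV period that T_linear_carrier[OF T_linear_orbit_sum uV]
      by (intro cong_vec_smult orbit_sum_shift) (simp_all add: is_period_def)
    finally show ?thesis
      unfolding A_def P_def using that U by (simp add: orbit_sum_mem subspace_smult)
  qed
  moreover have "P a \<approx> a" if "a \<in> A" for a
    using that subspace_carrier[OF U] averaged_orbit_sum_fixed[OF c]
    by (auto simp: A_def P_def)
  ultimately have "is_direct_sum U A {u \<in> U. P u \<approx> 0\<^sub>v m}"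
    by (intro projection_direct_sum[OF U _ P]) (auto simp: A_def)
  moreover have "invariant_subspace {u \<in> U. P u \<approx> 0\<^sub>v m}"
    using invariant_subspace_equalizer[OF U P T_linear_zero_map] .
  ultimately show ?thesis
    unfolding A_def by blast
qed

lemma full_period_vec_if_no_prime_cofactor:
  assumes U: "U \<subseteq> V" "is_period K U" "0 < K" and v: "v \<in> U"
    and no_cofactor: "\<And>q. prime q \<Longrightarrow> q dvd period U \<Longrightarrow> \<not> is_period (period U div q) {v}"
  shows "full_period_vec U v"
  unfolding full_period_vec_def
proof (intro conjI allI impI)
  fix j assume j: "is_period j {v}"
  have v_period: "is_period (period U) {v}"
    using is_period_subset[OF _ is_period_period[OF U]] v by simp
  have vV: "{v} \<subseteq> V"
    using U v by auto
  note period_v = is_period_iff_dvd[OF vV v_period period_pos[OF U]]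
  have "period {v} = period U"
  proof (rule ccontr)
    assume "period {v} \<noteq> period U"
    then obtain q where "prime q" "q dvd period U" "period {v} dvd period U div q"
      using proper_divisor_dvd_prime_cofactor[of "period {v}" "period U"] period_pos[OF U]
        v_period period_v by blast
    then show False
      using no_cofactor period_v by blast
  qed
  then show "is_period j U"
    using j period_v is_period_iff_dvd[OF U] by simp
qed (fact v)

lemma exists_vec_without_prime_cofactor:
  assumes U: "invariant_subspace U" and K: "is_period K U" "0 < K"
    and no_split: "\<And>q a. prime q \<Longrightarrow> q dvd period U \<Longrightarrow> q \<noteq> p \<Longrightarrow> a \<in> U
      \<Longrightarrow> is_period (period U div q) {a} \<Longrightarrow> a \<approx> 0\<^sub>v m"
  shows "\<exists>v\<in>U. \<forall>q. prime q \<longrightarrow> q dvd period U \<longrightarrow> \<not> is_period (period U div q) {v}"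
proof -
  note UV = subspace_carrier[OF U]
  note below = not_is_period_below_period[OF UV K]
  have K_pos: "0 < period U"
    using period_pos[OF UV K] .
  consider "p dvd period U" | "period U = 1" | "\<not> p dvd period U" "period U \<noteq> 1"
    by blast
  then show ?thesis
  proof cases
    case 1
    then obtain v where v: "v \<in> U" "\<not> is_period (period U div p) {v}"
      using exists_vec_not_fixed_by_cofactor[OF UV K prime_gt_1_nat[OF prime_p]] by blast
    have "\<not> is_period (period U div q) {v}" if "prime q" "q dvd period U" for q
    proof (cases "q = p")
      case False
      show ?thesis
      proof
        assume "is_period (period U div q) {v}"
        then have "v \<approx> 0\<^sub>v m"
          using no_split that False v(1) by blast
        then show False
          using is_period_singleton_zero v UV by blast
      qed
    qed (use v in simp)
    then show ?thesis
      using v(1) by blast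
  next
    case 2
    then show ?thesis
      using subspace_zero[OF U] by (auto dest: prime_gt_1_nat simp: nat_dvd_1_iff_1)
  next
    case 3
    obtain v where v: "v \<in> U" "\<not> v \<approx> 0\<^sub>v m"
    proof (rule ccontr)
      assume "\<not> thesis"
      then have "is_period 1 U"
        using UV is_period_singleton_zero[of _ 1] that by (auto simp: is_period_def)
      then show False
        using below[of 1] 3 K_pos by simp
    qed
    then show ?thesis
      using no_split 3 by blast
  qed
qed

lemma exists_proper_direct_sum:
  assumes U: "invariant_subspace U" and K: "is_period K U" "0 < K"
    and q: "prime q" "q dvd period U" "q \<noteq> p"
    and a: "a \<in> U" "is_period (period U div q) {a}" "\<not> a \<approx> 0\<^sub>v m"
  shows "\<exists>A B. invariant_subspace A \<and> invariant_subspace B \<and> is_direct_sum U A B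
    \<and> card (A \<inter> Zn) < card (U \<inter> Zn) \<and> card (B \<inter> Zn) < card (U \<inter> Zn)"
proof -
  note UV = subspace_carrier[OF U]
  define j where "j = period U div q"
  define A where "A = {u \<in> U. (T ^^ j) u \<approx> u}"
  have period_qj: "period U = q * j"
    using q(2) by (simp add: j_def)
  obtain B where B: "invariant_subspace B" and UAB: "is_direct_sum U A B"
    using fixed_part_has_complement[OF U _ primes_coprime[OF q(1) prime_p q(3)]]
      is_period_period[OF UV K] period_qj unfolding A_def by metis
  have A: "invariant_subspace A"
    unfolding A_def by (rule invariant_subspace_equalizer[OF U T_linear_funpow T_linear_id])
  have AU: "A \<subseteq> U" and BU: "B \<subseteq> U" and AB: "\<forall>w\<in>A \<inter> B. w \<approx> 0\<^sub>v m"
    using UAB by (simp_all add: is_direct_sum_def)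
  obtain u where "u \<in> U" "\<not> is_period j {u}"
    using exists_vec_not_fixed_by_cofactor[OF UV K prime_gt_1_nat[OF q(1)] q(2)] j_def by blast
  then have "card (A \<inter> Zn) < card (U \<inter> Zn)"
    using card_Zn_less[OF A U AU] by (auto simp: A_def is_period_def)
  moreover have "a \<in> A" "a \<notin> B"
    using a AB by (auto simp: A_def j_def is_period_def)
  then have "card (B \<inter> Zn) < card (U \<inter> Zn)"
    using card_Zn_less[OF B U BU] AU by blast
  ultimately show ?thesis
    using A B UAB by blast
qed

lemma full_period_vec_exists:
  assumes "invariant_subspace U" "is_period K U" "0 < K"
  shows "\<exists>v. full_period_vec U v"
  using assms
proof (induction "card (U \<inter> Zn)" arbitrary: U rule: less_induct)
  case less
  note U = less.prems(1) and K = less.prems(2,3)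
  show ?case
  proof (cases "\<exists>q a. prime q \<and> q dvd period U \<and> q \<noteq> p \<and> a \<in> U
      \<and> is_period (period U div q) {a} \<and> \<not> a \<approx> 0\<^sub>v m")
    case True
    then obtain A B where A: "invariant_subspace A" and B: "invariant_subspace B"
      and UAB: "is_direct_sum U A B"
      and card: "card (A \<inter> Zn) < card (U \<inter> Zn)" "card (B \<inter> Zn) < card (U \<inter> Zn)"
      using exists_proper_direct_sum[OF U K] by blast
    have "A \<subseteq> U" "B \<subseteq> U"
      using UAB by (simp_all add: is_direct_sum_def)
    then obtain a b where "full_period_vec A a" "full_period_vec B b"
      using less.hyps[OF card(1) A _ K(2)] less.hyps[OF card(2) B _ K(2)]
        is_period_subset K(1) by meson
    then show ?thesis
      using full_period_vec_direct_sum[OF U A B UAB] by blast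
  next
    case False
    then obtain v where "v \<in> U" "\<forall>q. prime q \<longrightarrow> q dvd period U \<longrightarrow> \<not> is_period (period U div q) {v}"
      using exists_vec_without_prime_cofactor[OF U K] by blast
    then show ?thesis
      using full_period_vec_if_no_prime_cofactor[OF subspace_carrier[OF U] K] by blast
  qed
qed

lemma pow_mat_mult_vec: "u \<in> V \<Longrightarrow> (M ^\<^sub>m j) *\<^sub>v u = (T ^^ j) u"
proof (induction j arbitrary: u)
  case (Suc j)
  have "(M ^\<^sub>m Suc j) *\<^sub>v u = (M ^\<^sub>m j) *\<^sub>v (M *\<^sub>v u)"
    using M_carrier Suc.prems by (simp add: assoc_mult_mat_vec[of _ m m _ m])
  then show ?case
    using Suc M_carrier by (simp add: T_def funpow_Suc_right del: funpow.simps)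
qed (use M_carrier in simp)

lemma Zn_act_pow_mat: "u \<in> V \<Longrightarrow> Zn_act (M ^\<^sub>m j) (int p) u = reduce ((T ^^ j) u)"
  using M_carrier by (intro eq_vecI) (simp_all add: Zn_act_def reduce_def pow_mat_mult_vec)

lemma Zn_act_funpow: "x \<in> Zn \<Longrightarrow> (Zn_act M (int p) ^^ j) x = reduce ((T ^^ j) x)"
proof (induction j)
  case 0
  then show ?case
    by (simp add: reduce_Zn_id)
next
  case (Suc j)
  have xV: "x \<in> V"
    using Suc.prems Zn_subset_V by blast
  have "Zn_act M (int p) (reduce ((T ^^ j) x)) = reduce (T (reduce ((T ^^ j) x)))"
    using Zn_act_pow_mat[of _ 1] M_carrier reduce_Zn Zn_subset_V by (auto simp: Zn_act_def)
  also have "\<dots> = reduce (T ((T ^^ j) x))"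
  proof -
    have "reduce ((T ^^ j) x) \<in> V"
      using reduce_Zn Zn_subset_V by blast
    then show ?thesis
      using xV reduce_cong by (intro iffD2[OF reduce_eq_iff] T_cong) simp_all
  qed
  finally show ?case
    using Suc by simp
qed

lemma acts_as_id_iff_is_period: "acts_as_id (M ^\<^sub>m j) (int p) \<longleftrightarrow> is_period j V"
proof -
  have act: "Zn_act (M ^\<^sub>m j) (int p) x = reduce ((T ^^ j) x)" if "x \<in> Zn" for x
    using Zn_act_pow_mat that Zn_subset_V by blast
  have "dim_col (M ^\<^sub>m j) = m"
    using M_carrier by (rule pow_mat_dim_square(2))
  then have "acts_as_id (M ^\<^sub>m j) (int p) \<longleftrightarrow> (\<forall>x\<in>Zn. reduce ((T ^^ j) x) = reduce x)"
    unfolding acts_as_id_def using act reduce_Zn_id by (metis (no_types, lifting))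
  also have "\<dots> \<longleftrightarrow> (\<forall>x\<in>Zn. is_period j {x})"
    using Zn_subset_V reduce_eq_iff[of "(T ^^ j) _" _] by (auto simp: is_period_def subset_iff)
  also have "\<dots> \<longleftrightarrow> is_period j V"
  proof
    assume Zn: "\<forall>x\<in>Zn. is_period j {x}"
    show "is_period j V"
      unfolding is_period_def
    proof
      fix u assume u: "u \<in> V"
      have "is_period j {reduce u}"
        using Zn reduce_Zn by blast
      then have "is_period j {u}"
        using is_period_singleton_cong[OF _ u reduce_cong] reduce_Zn Zn_subset_V by blast
      then show "(T ^^ j) u \<approx> u"
        by (simp add: is_period_def)
    qed
  qed (use Zn_subset_V in \<open>auto simp: is_period_def\<close>)
  finally show ?thesis .
qed

lemma directed_cycle_of_Zn_order:
  assumes "has_Zn_order M (int p) k"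
  shows "has_directed_cycle Zn (move_arc M (int p)) k"
proof -
  have k: "0 < k" "is_period k V" and below: "\<And>j. 0 < j \<Longrightarrow> j < k \<Longrightarrow> \<not> is_period j V"
    using assms by (simp_all add: has_Zn_order_def acts_as_id_iff_is_period)
  obtain v where v: "full_period_vec V v"
    using full_period_vec_exists[OF invariant_subspace_V k(2,1)] by blast
  define x where "x = reduce v"
  have x: "x \<in> Zn" and xV: "x \<in> V"
    using reduce_Zn Zn_subset_V by (auto simp: x_def)
  have vV: "v \<in> V"
    using v by (simp add: full_period_vec_def)
  have orbit_x: "(Zn_act M (int p) ^^ j) x = x \<longleftrightarrow> is_period j V" for j
  proof -
    have "(Zn_act M (int p) ^^ j) x = x \<longleftrightarrow> reduce ((T ^^ j) x) = reduce x"
      using Zn_act_funpow[OF x] reduce_Zn_id[OF x] by simp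
    also have "\<dots> \<longleftrightarrow> is_period j {x}"
      using xV by (simp add: reduce_eq_iff is_period_def)
    also have "\<dots> \<longleftrightarrow> is_period j {v}"
      using is_period_singleton_cong[OF xV vV] is_period_singleton_cong[OF vV xV]
        reduce_cong[of v] cong_vec_sym unfolding x_def by blast
    also have "\<dots> \<longleftrightarrow> is_period j V"
      using v is_period_subset[of "{v}" V] vV by (auto simp: full_period_vec_def)
    finally show ?thesis .
  qed
  have "move_arc M (int p) = (\<lambda>y z. y \<in> Zn \<and> z \<in> Zn \<and> z = Zn_act M (int p) y)"
    using M_carrier by (auto simp: move_arc_def fun_eq_iff)
  moreover have "Zn_act M (int p) y \<in> Zn" for y
    using M_carrier p_pos by (simp add: Zn_act_def Zn_vecs_def)
  ultimately show ?thesis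
    using has_directed_cycle_orbit[OF _ x k(1)] orbit_x k below by simp
qed

end

theorem theorem3p6:
  fixes m :: nat and M S :: "int mat" and R :: "rat mat"
  assumes "M \<in> carrier_mat m m" and "S \<in> carrier_mat m m"
    and "det (map_mat rat_of_int S) \<noteq> 0"
    and "\<exists>Sinv. similar_mat_wit (map_mat rat_of_int M) R (map_mat rat_of_int S) Sinv"
    and "is_rcf_of R M"
  shows "\<forall>p k. prime p \<and> gcd (det S) (int p) = 1 \<and> has_Zn_order M (int p) k
           \<longrightarrow> has_directed_cycle (Zn_vecs m (int p)) (move_arc M (int p)) k"
proof (intro allI impI)
  fix p k assume "prime p \<and> gcd (det S) (int p) = 1 \<and> has_Zn_order M (int p) k"
  then have "prime p" and order: "has_Zn_order M (int p) k"
    by simp_all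
  interpret int_mat_mod_prime m M p
    using assms(1) \<open>prime p\<close> by unfold_locales
  show "has_directed_cycle (Zn_vecs m (int p)) (move_arc M (int p)) k"
    using directed_cycle_of_Zn_order[OF order] .
qed

end
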